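(* Let $PS = D \cup LP \cup MP \cup IC$ be a P2P system such that no negation occurs in $LP$. Then the relation $\sqsupseteq$ (max-min preferability) is a partial order on the set of weak models of $PS$.
   Context: Peer atoms: a peer identifier is a positive integer; a peer atom is $i\!:\!p(t_1,\dots,t_k)$ with $i$ a peer identifier, $p$ a predicate and $t_j$ terms; $i\!:\!p$ is a peer predicate. A literal is an atom $A$ or its negation-as-failure $not\ A$. Built-in atoms are $X\,\theta\,Y$ with $\theta\in\{<,>,\le,\ge,=,\neq\}$. Rules (all safe): a standard rule $H\leftarrow \mathcal B$; an integrity constraint $\leftarrow \mathcal B$; a maximal mapping rule $i\!:\!h(X) \leftharpoonup j\!:\!(p_1(X_1),\dots,p_m(X_m),\varphi)$ with $i\neq j$; a minimal mapping rule, identical but with $\leftharpoondown$. A peer $P_i=\langle D_i,LP_i,MP_i,IC_i\rangle$ consists of a finite set $D_i$ of ground atoms with identifier $i$, a finite set $LP_i$ of standard rules all of whose atoms have identifier $i$, a finite set $MP_i$ of mapping rules with head identifier $i$, and a finite set $IC_i$ of integrity constraints over atoms with identifier $i$. A P2P system is a set $PS=\{P_1,\dots,P_n\}$ of peers in which every source identifier of a mapping rule lies in $[1..n]$; $D,LP,MP,IC$ are the unions of the components, and $PS$ is identified with $D\cup LP\cup MP\cup IC$. A predicate is derived if it heads a standard rule, a mapping predicate if it heads a mapping rule, base otherwise; each predicate has exactly one type and each mapping predicate heads exactly one mapping rule. Semantics: interpretation = set of ground peer atoms; $A$ true iff $A\in M$, $not\ A$ true iff $A\notin M$; a standard rule is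 satisfied iff its body is false or its head true; a constraint iff its body is false. $MM(\Pi)$ = inclusion-minimal models. $St(r)$ turns a mapping rule with head $H$, body $\mathcal B$ into $H\leftarrow\mathcal B$. $M$ is a weak model of $PS$ if $\{M\}=MM(St(PS^M))$, where $PS^M$ is obtained from $ground(PS)$ by removing every rule whose body contains $not\ A$ with $A\in M$, deleting negative literals from the remaining rules, and removing every ground mapping rule whose head is not in $M$. $M[\overline{MP}]$ (resp. $M[\underline{MP}]$) is the set of atoms of $M$ whose predicate heads a maximal (resp. minimal) mapping rule. For weak models $M,N$: $M\sqsupseteq N$ iff either $M[\overline{MP}]\supsetneq N[\overline{MP}]$, or $M[\overline{MP}]=N[\overline{MP}]$ and $M[\underline{MP}]\subseteq N[\underline{MP}]$. *)

theory Defs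
  imports Main
begin

text \<open>Terms: variables of type 'v and constants of type 'c (constants are linearly
ordered so that the built-in comparisons make sense).\<close>
datatype ('v, 'c) trm = Var 'v | Const 'c

text \<open>Peer atoms i:p(t1,...,tk); the argument type 'a is either terms or (for ground atoms) constants.
Peer identifiers are positive naturals.\<close>
datatype ('p, 'a) atom = Atom (peer_of: nat) (pred_of: 'p) (args_of: "'a list")

datatype cmp = Lt | Gt | Le | Ge | Eq | Neq

datatype ('p, 'a) lit = Pos "('p, 'a) atom" | Neg "('p, 'a) atom" | Cmp cmp 'a 'a

datatype mkind = MaxM | MinM

datatype ('p, 'a) rule =
    Std "('p, 'a) atom" "('p, 'a) lit list"
  | Constr "('p, 'a) lit list"
  | Mapr mkind "('p, 'a) atom" "('p, 'a) lit list"

fun body :: "('p, 'a) rule \<Rightarrow> ('p, 'a) lit list" where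
  "body (Std H B) = B"
| "body (Constr B) = B"
| "body (Mapr k H B) = B"

fun is_neg :: "('p, 'a) lit \<Rightarrow> bool" where
  "is_neg (Neg A) = True"
| "is_neg _ = False"

fun is_pos :: "('p, 'a) lit \<Rightarrow> bool" where
  "is_pos (Pos A) = True"
| "is_pos _ = False"

fun is_cmp :: "('p, 'a) lit \<Rightarrow> bool" where
  "is_cmp (Cmp t x y) = True"
| "is_cmp _ = False"

fun lit_atoms :: "('p, 'a) lit \<Rightarrow> ('p, 'a) atom set" where
  "lit_atoms (Pos A) = {A}"
| "lit_atoms (Neg A) = {A}"
| "lit_atoms (Cmp t x y) = {}"

fun rule_atoms :: "('p, 'a) rule \<Rightarrow> ('p, 'a) atom set" where
  "rule_atoms (Std H B) = insert H (\<Union>l\<in>set B. lit_atoms l)"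
| "rule_atoms (Constr B) = (\<Union>l\<in>set B. lit_atoms l)"
| "rule_atoms (Mapr k H B) = insert H (\<Union>l\<in>set B. lit_atoms l)"

fun term_vars :: "('v, 'c) trm \<Rightarrow> 'v set" where
  "term_vars (Var v) = {v}"
| "term_vars (Const c) = {}"

fun term_consts :: "('v, 'c) trm \<Rightarrow> 'c set" where
  "term_consts (Var v) = {}"
| "term_consts (Const c) = {c}"

definition atom_vars :: "('p, ('v, 'c) trm) atom \<Rightarrow> 'v set" where
  "atom_vars A = (\<Union>t\<in>set (args_of A). term_vars t)"

fun lit_vars :: "('p, ('v, 'c) trm) lit \<Rightarrow> 'v set" where
  "lit_vars (Pos A) = atom_vars A"
| "lit_vars (Neg A) = atom_vars A"
| "lit_vars (Cmp t x y) = term_vars x \<union> term_vars y"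

fun rule_vars :: "('p, ('v, 'c) trm) rule \<Rightarrow> 'v set" where
  "rule_vars (Std H B) = atom_vars H \<union> (\<Union>l\<in>set B. lit_vars l)"
| "rule_vars (Constr B) = (\<Union>l\<in>set B. lit_vars l)"
| "rule_vars (Mapr k H B) = atom_vars H \<union> (\<Union>l\<in>set B. lit_vars l)"

fun lit_consts :: "('p, ('v, 'c) trm) lit \<Rightarrow> 'c set" where
  "lit_consts (Pos A) = (\<Union>t\<in>set (args_of A). term_consts t)"
| "lit_consts (Neg A) = (\<Union>t\<in>set (args_of A). term_consts t)"
| "lit_consts (Cmp t x y) = term_consts x \<union> term_consts y"

fun rule_consts :: "('p, ('v, 'c) trm) rule \<Rightarrow> 'c set" where
  "rule_consts (Std H B) = (\<Union>t\<in>set (args_of H). term_consts t) \<union> (\<Union>l\<in>set B. lit_consts l)"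
| "rule_consts (Constr B) = (\<Union>l\<in>set B. lit_consts l)"
| "rule_consts (Mapr k H B) = (\<Union>t\<in>set (args_of H). term_consts t) \<union> (\<Union>l\<in>set B. lit_consts l)"

definition safe :: "('p, ('v, 'c) trm) rule \<Rightarrow> bool" where
  "safe r \<longleftrightarrow> rule_vars r \<subseteq> (\<Union>A\<in>{A. Pos A \<in> set (body r)}. atom_vars A)"

record ('p, 'v, 'c) peer =
  D  :: "('p, 'c) atom set"
  LP :: "('p, ('v, 'c) trm) rule set"
  MP :: "('p, ('v, 'c) trm) rule set"
  IC :: "('p, ('v, 'c) trm) rule set"

definition mapping_rule_ok :: "nat \<Rightarrow> nat \<Rightarrow> ('p, ('v, 'c) trm) rule \<Rightarrow> bool" where
  "mapping_rule_ok n i r \<longleftrightarrow>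
     (\<exists>k H B j. r = Mapr k H B \<and> peer_of H = i \<and> j \<noteq> i \<and> 1 \<le> j \<and> j \<le> n \<and>
        (\<exists>l\<in>set B. is_pos l) \<and>
        (\<forall>l\<in>set B. is_pos l \<or> is_cmp l) \<and>
        (\<forall>A. Pos A \<in> set B \<longrightarrow> peer_of A = j))"

definition peer_ok :: "nat \<Rightarrow> nat \<Rightarrow> ('p, 'v, 'c) peer \<Rightarrow> bool" where
  "peer_ok n i P \<longleftrightarrow>
     finite (D P) \<and> (\<forall>A\<in>D P. peer_of A = i) \<and>
     finite (LP P) \<and> (\<forall>r\<in>LP P. (\<exists>H B. r = Std H B) \<and> (\<forall>A\<in>rule_atoms r. peer_of A = i)) \<and>
     finite (MP P) \<and> (\<forall>r\<in>MP P. mapping_rule_ok n i r) \<and>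
     finite (IC P) \<and> (\<forall>r\<in>IC P. (\<exists>B. r = Constr B) \<and> (\<forall>A\<in>rule_atoms r. peer_of A = i)) \<and>
     (\<forall>r\<in>LP P \<union> MP P \<union> IC P. safe r)"

text \<open>A P2P system PS = {P_1,...,P_n} is represented as a list; peer P_i is PS ! (i - 1).\<close>
definition allD :: "('p, 'v, 'c) peer list \<Rightarrow> ('p, 'c) atom set" where
  "allD PS = (\<Union>P\<in>set PS. D P)"
definition allLP :: "('p, 'v, 'c) peer list \<Rightarrow> ('p, ('v, 'c) trm) rule set" where
  "allLP PS = (\<Union>P\<in>set PS. LP P)"
definition allMP :: "('p, 'v, 'c) peer list \<Rightarrow> ('p, ('v, 'c) trm) rule set" where
  "allMP PS = (\<Union>P\<in>set PS. MP P)"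
definition allIC :: "('p, 'v, 'c) peer list \<Rightarrow> ('p, ('v, 'c) trm) rule set" where
  "allIC PS = (\<Union>P\<in>set PS. IC P)"

definition derived_preds :: "('p, 'v, 'c) peer list \<Rightarrow> (nat \<times> 'p) set" where
  "derived_preds PS = {(peer_of H, pred_of H) | H B. Std H B \<in> allLP PS}"
definition mapping_preds :: "('p, 'v, 'c) peer list \<Rightarrow> (nat \<times> 'p) set" where
  "mapping_preds PS = {(peer_of H, pred_of H) | k H B. Mapr k H B \<in> allMP PS}"

definition p2p_system :: "('p, 'v, 'c) peer list \<Rightarrow> bool" where
  "p2p_system PS \<longleftrightarrow>
     (\<forall>k < length PS. peer_ok (length PS) (Suc k) (PS ! k)) \<and>
     derived_preds PS \<inter> mapping_preds PS = {} \<and>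
     (\<forall>k1 H1 B1 k2 H2 B2. Mapr k1 H1 B1 \<in> allMP PS \<longrightarrow> Mapr k2 H2 B2 \<in> allMP PS \<longrightarrow>
        (peer_of H1, pred_of H1) = (peer_of H2, pred_of H2) \<longrightarrow>
        Mapr k1 H1 B1 = Mapr k2 H2 B2)"

fun inst :: "('v \<Rightarrow> 'c) \<Rightarrow> ('v, 'c) trm \<Rightarrow> 'c" where
  "inst \<sigma> (Var v) = \<sigma> v"
| "inst \<sigma> (Const c) = c"

fun gatom :: "('v \<Rightarrow> 'c) \<Rightarrow> ('p, ('v, 'c) trm) atom \<Rightarrow> ('p, 'c) atom" where
  "gatom \<sigma> (Atom i p ts) = Atom i p (map (inst \<sigma>) ts)"

fun glit :: "('v \<Rightarrow> 'c) \<Rightarrow> ('p, ('v, 'c) trm) lit \<Rightarrow> ('p, 'c) lit" where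
  "glit \<sigma> (Pos A) = Pos (gatom \<sigma> A)"
| "glit \<sigma> (Neg A) = Neg (gatom \<sigma> A)"
| "glit \<sigma> (Cmp t x y) = Cmp t (inst \<sigma> x) (inst \<sigma> y)"

fun grule :: "('v \<Rightarrow> 'c) \<Rightarrow> ('p, ('v, 'c) trm) rule \<Rightarrow> ('p, 'c) rule" where
  "grule \<sigma> (Std H B) = Std (gatom \<sigma> H) (map (glit \<sigma>) B)"
| "grule \<sigma> (Constr B) = Constr (map (glit \<sigma>) B)"
| "grule \<sigma> (Mapr k H B) = Mapr k (gatom \<sigma> H) (map (glit \<sigma>) B)"

definition herbrand :: "('p, 'v, 'c) peer list \<Rightarrow> 'c set" where
  "herbrand PS = (\<Union>A\<in>allD PS. set (args_of A)) \<union>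
                 (\<Union>r\<in>allLP PS \<union> allMP PS \<union> allIC PS. rule_consts r)"

definition ground :: "('p, 'v, 'c) peer list \<Rightarrow> ('p, 'c) rule set" where
  "ground PS = (\<lambda>A. Std A []) ` allD PS \<union>
     {grule \<sigma> r | \<sigma> r. r \<in> allLP PS \<union> allMP PS \<union> allIC PS \<and>
                       (\<forall>v\<in>rule_vars r. \<sigma> v \<in> herbrand PS)}"

fun cmp_eval :: "cmp \<Rightarrow> 'c::linorder \<Rightarrow> 'c \<Rightarrow> bool" where
  "cmp_eval Lt x y = (x < y)"
| "cmp_eval Gt x y = (x > y)"
| "cmp_eval Le x y = (x \<le> y)"
| "cmp_eval Ge x y = (x \<ge> y)"
| "cmp_eval Eq x y = (x = y)"
| "cmp_eval Neq x y = (x \<noteq> y)"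

fun lit_true :: "('p, 'c::linorder) atom set \<Rightarrow> ('p, 'c) lit \<Rightarrow> bool" where
  "lit_true M (Pos A) = (A \<in> M)"
| "lit_true M (Neg A) = (A \<notin> M)"
| "lit_true M (Cmp t x y) = cmp_eval t x y"

definition body_true :: "('p, 'c::linorder) atom set \<Rightarrow> ('p, 'c) lit list \<Rightarrow> bool" where
  "body_true M B \<longleftrightarrow> (\<forall>l\<in>set B. lit_true M l)"

fun satisfies :: "('p, 'c::linorder) atom set \<Rightarrow> ('p, 'c) rule \<Rightarrow> bool" where
  "satisfies M (Std H B) = (body_true M B \<longrightarrow> H \<in> M)"
| "satisfies M (Constr B) = (\<not> body_true M B)"
| "satisfies M (Mapr k H B) = (body_true M B \<longrightarrow> H \<in> M)"

definition is_model :: "('p, 'c::linorder) rule set \<Rightarrow> ('p, 'c) atom set \<Rightarrow> bool" where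
  "is_model \<Pi> M \<longleftrightarrow> (\<forall>r\<in>\<Pi>. satisfies M r)"

definition MM :: "('p, 'c::linorder) rule set \<Rightarrow> ('p, 'c) atom set set" where
  "MM \<Pi> = {M. is_model \<Pi> M \<and> (\<forall>N. N \<subset> M \<longrightarrow> \<not> is_model \<Pi> N)}"

fun St :: "('p, 'a) rule \<Rightarrow> ('p, 'a) rule" where
  "St (Mapr k H B) = Std H B"
| "St r = r"

fun strip_neg :: "('p, 'a) rule \<Rightarrow> ('p, 'a) rule" where
  "strip_neg (Std H B) = Std H (filter (\<lambda>l. \<not> is_neg l) B)"
| "strip_neg (Constr B) = Constr (filter (\<lambda>l. \<not> is_neg l) B)"
| "strip_neg (Mapr k H B) = Mapr k H (filter (\<lambda>l. \<not> is_neg l) B)"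

definition reduct :: "('p, 'v, 'c) peer list \<Rightarrow> ('p, 'c) atom set \<Rightarrow> ('p, 'c) rule set" where
  "reduct PS M = strip_neg `
     {r \<in> ground PS. (\<forall>A. Neg A \<in> set (body r) \<longrightarrow> A \<notin> M) \<and>
                     (\<forall>k H B. r = Mapr k H B \<longrightarrow> H \<in> M)}"

definition weak_model :: "('p, 'v, 'c::linorder) peer list \<Rightarrow> ('p, 'c) atom set \<Rightarrow> bool" where
  "weak_model PS M \<longleftrightarrow> MM (St ` reduct PS M) = {M}"

definition max_preds :: "('p, 'v, 'c) peer list \<Rightarrow> (nat \<times> 'p) set" where
  "max_preds PS = {(peer_of H, pred_of H) | H B. Mapr MaxM H B \<in> allMP PS}"
definition min_preds :: "('p, 'v, 'c) peer list \<Rightarrow> (nat \<times> 'p) set" where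
  "min_preds PS = {(peer_of H, pred_of H) | H B. Mapr MinM H B \<in> allMP PS}"

definition restr :: "('p, 'c) atom set \<Rightarrow> (nat \<times> 'p) set \<Rightarrow> ('p, 'c) atom set" where
  "restr M Q = {A \<in> M. (peer_of A, pred_of A) \<in> Q}"

definition preferable :: "('p, 'v, 'c) peer list \<Rightarrow> ('p, 'c) atom set \<Rightarrow> ('p, 'c) atom set \<Rightarrow> bool" where
  "preferable PS M N \<longleftrightarrow>
     restr M (max_preds PS) \<supset> restr N (max_preds PS) \<or>
     (restr M (max_preds PS) = restr N (max_preds PS) \<and>
      restr M (min_preds PS) \<subseteq> restr N (min_preds PS))"

definition pref_rel :: "('p, 'v, 'c::linorder) peer list \<Rightarrow> (('p, 'c) atom set \<times> ('p, 'c) atom set) set" where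
  "pref_rel PS = {(M, N). weak_model PS M \<and> weak_model PS N \<and> preferable PS M N}"

end

theory Submission
  imports Defs
begin

text \<open>Without negation in the local programs, the only rules whose presence in PS^M depends
  on M other than through its mapping atoms are integrity constraints. So if every mapping atom
  of a weak model M lies in a weak model N, every non-constraint rule of St(PS^M) is also a rule
  of St(PS^N); as all bodies are positive, M \<inter> N is then a model of St(PS^M), and minimality of M
  gives M \<subseteq> N. Two mutually preferable weak models agree on all mapping atoms and hence
  coincide; reflexivity and transitivity are immediate.\<close>

lemma lit_true_mono:
  assumes "\<not> is_neg l" "lit_true M l" "M \<subseteq> N"
  shows "lit_true N l"
  using assms by (cases l) auto

lemma body_true_mono:
  assumes "\<forall>l\<in>set B. \<not> is_neg l" "body_true M B" "M \<subseteq> N"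
  shows "body_true N B"
  using assms lit_true_mono unfolding body_true_def by blast

lemma satisfies_Int:
  assumes pos: "\<forall>l\<in>set (body r). \<not> is_neg l"
    and M: "satisfies M r"
    and N: "\<nexists>B. r = Constr B \<Longrightarrow> satisfies N r"
  shows "satisfies (M \<inter> N) r"
proof (cases r)
  case (Std H B)
  then show ?thesis
    using M N pos body_true_mono[of B "M \<inter> N" M] body_true_mono[of B "M \<inter> N" N] by auto
next
  case (Constr B)
  then show ?thesis using M pos body_true_mono[of B "M \<inter> N" M] by auto
next
  case (Mapr k H B)
  then show ?thesis
    using M N pos body_true_mono[of B "M \<inter> N" M] body_true_mono[of B "M \<inter> N" N] by auto
qed

lemma MM_subset_if_model:
  assumes M: "M \<in> MM \<Pi>"
    and N: "is_model \<Pi>' N"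
    and pos: "\<forall>r\<in>\<Pi>. \<forall>l\<in>set (body r). \<not> is_neg l"
    and rules: "\<forall>r\<in>\<Pi>. (\<nexists>B. r = Constr B) \<longrightarrow> r \<in> \<Pi>'"
  shows "M \<subseteq> N"
proof -
  have "is_model \<Pi> M" using M unfolding MM_def by blast
  then have "is_model \<Pi> (M \<inter> N)"
    using N pos rules satisfies_Int unfolding is_model_def by metis
  then have "\<not> M \<inter> N \<subset> M" using M unfolding MM_def by blast
  then show ?thesis by blast
qed

lemma body_St_strip_neg: "l \<in> set (body (St (strip_neg r))) \<Longrightarrow> \<not> is_neg l"
  by (cases r) auto

lemma is_neg_glit [simp]: "is_neg (glit \<sigma> l) = is_neg l"
  by (cases l) auto

lemma body_grule [simp]: "body (grule \<sigma> r) = map (glit \<sigma>) (body r)"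
  by (cases r) auto

lemma peer_pred_gatom [simp]:
  "peer_of (gatom \<sigma> A) = peer_of A" "pred_of (gatom \<sigma> A) = pred_of A"
  by (cases A; simp)+

lemma p2p_system_peer_ok:
  assumes "p2p_system PS" "P \<in> set PS"
  obtains i where "peer_ok (length PS) i P"
  using assms unfolding p2p_system_def by (metis in_set_conv_nth)

lemma allLP_Std:
  assumes "p2p_system PS" "r \<in> allLP PS"
  obtains H B where "r = Std H B"
proof -
  obtain P i where "r \<in> LP P" "peer_ok (length PS) i P"
    using assms p2p_system_peer_ok unfolding allLP_def by blast
  then show ?thesis using that unfolding peer_ok_def by blast
qed

lemma allIC_Constr:
  assumes "p2p_system PS" "r \<in> allIC PS"
  obtains B where "r = Constr B"
proof -
  obtain P i where "r \<in> IC P" "peer_ok (length PS) i P"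
    using assms p2p_system_peer_ok unfolding allIC_def by blast
  then show ?thesis using that unfolding peer_ok_def by blast
qed

lemma is_pos_or_cmp_not_neg: "is_pos l \<or> is_cmp l \<Longrightarrow> \<not> is_neg l"
  by (cases l) auto

lemma allMP_positive:
  assumes "p2p_system PS" "r \<in> allMP PS"
  obtains k H B where "r = Mapr k H B" "\<forall>l\<in>set B. \<not> is_neg l"
proof -
  obtain P i where "P \<in> set PS" "r \<in> MP P" "peer_ok (length PS) i P"
    using assms p2p_system_peer_ok unfolding allMP_def by blast
  then have "mapping_rule_ok (length PS) i r" unfolding peer_ok_def by blast
  then show ?thesis
    using that is_pos_or_cmp_not_neg unfolding mapping_rule_ok_def by blast
qed

lemma ground_nonconstraint_rule:
  assumes ps: "p2p_system PS"
    and nn: "\<forall>r\<in>allLP PS. \<forall>l\<in>set (body r). \<not> is_neg l"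
    and r: "r \<in> ground PS" "\<nexists>B. r = Constr B"
  shows "\<forall>l\<in>set (body r). \<not> is_neg l"
    and "r = Mapr k H B \<Longrightarrow> (peer_of H, pred_of H) \<in> mapping_preds PS"
proof -
  have "(\<forall>l\<in>set (body r). \<not> is_neg l) \<and>
        (r = Mapr k H B \<longrightarrow> (peer_of H, pred_of H) \<in> mapping_preds PS)"
  proof (cases "r \<in> (\<lambda>A. Std A []) ` allD PS")
    case True
    then show ?thesis by auto
  next
    case False
    then obtain \<sigma> r0 where r0: "r = grule \<sigma> r0" "r0 \<in> allLP PS \<union> allMP PS \<union> allIC PS"
      using r(1) unfolding ground_def by blast
    consider "r0 \<in> allLP PS" | "r0 \<in> allMP PS" | "r0 \<in> allIC PS" using r0(2) by blast
    then show ?thesis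
    proof cases
      case 1
      then obtain H0 B0 where "r0 = Std H0 B0" by (rule allLP_Std[OF ps])
      then show ?thesis using r0(1) nn 1 by auto
    next
      case 2
      then obtain k0 H0 B0 where r0_def: "r0 = Mapr k0 H0 B0" "\<forall>l\<in>set B0. \<not> is_neg l"
        by (rule allMP_positive[OF ps])
      have "(peer_of H0, pred_of H0) \<in> mapping_preds PS"
        using 2 r0_def(1) unfolding mapping_preds_def by blast
      then show ?thesis using r0(1) r0_def by auto
    next
      case 3
      then obtain B0 where "r0 = Constr B0" by (rule allIC_Constr[OF ps])
      then show ?thesis using r0(1) r(2) by auto
    qed
  qed
  then show "\<forall>l\<in>set (body r). \<not> is_neg l"
    and "r = Mapr k H B \<Longrightarrow> (peer_of H, pred_of H) \<in> mapping_preds PS"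
    by blast+
qed

lemma St_reduct_nonconstraint_transfer:
  assumes ps: "p2p_system PS"
    and nn: "\<forall>r\<in>allLP PS. \<forall>l\<in>set (body r). \<not> is_neg l"
    and maps: "restr M (mapping_preds PS) \<subseteq> N"
    and r': "r' \<in> St ` reduct PS M" "\<nexists>B. r' = Constr B"
  shows "r' \<in> St ` reduct PS N"
proof -
  obtain r where r: "r \<in> ground PS" "\<forall>k H B. r = Mapr k H B \<longrightarrow> H \<in> M"
      and r'_def: "r' = St (strip_neg r)"
    using r'(1) unfolding reduct_def by blast
  have "\<nexists>B. r = Constr B" using r'(2) r'_def by auto
  note positive = ground_nonconstraint_rule[OF ps nn r(1) this]
  have "\<forall>A. Neg A \<in> set (body r) \<longrightarrow> A \<notin> N" using positive(1) by force
  moreover have "\<forall>k H B. r = Mapr k H B \<longrightarrow> H \<in> N"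
    using r(2) positive(2) maps unfolding restr_def by blast
  ultimately show ?thesis using r(1) r'_def unfolding reduct_def by blast
qed

lemma weak_model_subset_if_mapping_atoms_subset:
  assumes ps: "p2p_system PS"
    and nn: "\<forall>r\<in>allLP PS. \<forall>l\<in>set (body r). \<not> is_neg l"
    and M: "weak_model PS M" and N: "weak_model PS N"
    and maps: "restr M (mapping_preds PS) \<subseteq> N"
  shows "M \<subseteq> N"
proof (rule MM_subset_if_model)
  show "M \<in> MM (St ` reduct PS M)" using M unfolding weak_model_def by blast
  show "is_model (St ` reduct PS N) N" using N unfolding weak_model_def MM_def by blast
  show "\<forall>r\<in>St ` reduct PS M. \<forall>l\<in>set (body r). \<not> is_neg l"
    unfolding reduct_def using body_St_strip_neg by blast
  show "\<forall>r\<in>St ` reduct PS M. (\<nexists>B. r = Constr B) \<longrightarrow> r \<in> St ` reduct PS N"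
    using St_reduct_nonconstraint_transfer[OF ps nn maps] by blast
qed

lemma mapping_preds_eq: "mapping_preds PS = max_preds PS \<union> min_preds PS"
  unfolding mapping_preds_def max_preds_def min_preds_def by (auto, metis mkind.exhaust)

lemma restr_Un: "restr M (Q \<union> R) = restr M Q \<union> restr M R"
  unfolding restr_def by blast

theorem proposition4:
  fixes PS :: "('p, 'v, 'c::linorder) peer list"
  assumes "p2p_system PS"
    and "\<forall>r\<in>allLP PS. \<forall>l\<in>set (body r). \<not> is_neg l"
  shows "partial_order_on {M. weak_model PS M} (pref_rel PS)"
  unfolding partial_order_on_def preorder_on_def
proof (intro conjI)
  show "refl_on {M. weak_model PS M} (pref_rel PS)"
    by (rule refl_onI) (auto simp: pref_rel_def preferable_def)
  show "trans (pref_rel PS)"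
    unfolding trans_def pref_rel_def preferable_def by blast
  show "antisym (pref_rel PS)"
  proof (rule antisymI)
    fix M N assume "(M, N) \<in> pref_rel PS" "(N, M) \<in> pref_rel PS"
    then have "weak_model PS M" "weak_model PS N"
      and "restr M (mapping_preds PS) = restr N (mapping_preds PS)"
      unfolding pref_rel_def preferable_def mapping_preds_eq restr_Un by auto
    then show "M = N"
      using weak_model_subset_if_mapping_atoms_subset[OF assms] unfolding restr_def by blast
  qed
qed (auto simp: pref_rel_def)

end
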